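(* For $\alpha_2\in\mathbb{C}$ consider the system $$\frac{dx}{dt}=y,\quad \frac{dy}{dt}=z,\quad \frac{dz}{dt}=-6y^2+w+\frac t4,\quad \frac{dw}{dt}=wq+\frac{2\alpha_2-1}{4},\quad \frac{dq}{dt}=-\frac12q^2-4y .$$ Write $( * )=(x,y,z,w,q,t;\alpha_2)$ and $D:=t+2w+2yq^2-8y^2-4zq$. Define $$s_0:( * )\mapsto\left(x,y,z,w,q+\frac{\alpha_2-\frac12}{w},t;1-\alpha_2\right),$$ $$s_1:( * )\mapsto\Big(x+\frac{2\alpha_2+1}{2D},\ y+\frac{(2\alpha_2+1)q}{2D}-\frac{(2\alpha_2+1)^2}{4D^2},\ z+\frac{(2\alpha_2+1)(q^2-8y)}{4D}-\frac{3(2\alpha_2+1)^2q}{4D^2}+\frac{(2\alpha_2+1)^3}{4D^3},$$ $$w+\frac{2(2\alpha_2+1)(yq-z)}{D}+\frac{(2\alpha_2+1)^2(q^2+4y)}{4D^2},\ q-\frac{2\alpha_2+1}{D},\ t;\ -1-\alpha_2\Big),$$ $$\pi:( * )\mapsto\left(x+\frac q2,\ -\left(y+\frac{q^2}{4}\right),\ -\left(z-\frac14q(q^2+8y)\right),\ -\left(w+yq^2-4y^2-2zq+\frac t2\right),\ -q,\ t;\ -\alpha_2\right).$$ Then $s_0,s_1,\pi$ are Bäcklund transformations of this system (each maps solutions with parameter $\alpha_2$ to solutions with the transformed parameter), and they generate a group of Bäcklund transformations realizing the extended affine Weyl group of type $A_1^{(1)}$.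
   Context: The extended affine Weyl group of type $A_1^{(1)}$ is the group generated by $s_0,s_1,\pi$ with the relations $s_0^2=s_1^2=\pi^2=1$ and $\pi s_0=s_1\pi$. A transformation is applied to a rational function $g$ of $(x,y,z,w,q,t,\alpha_2)$ by substituting the images of the variables and the parameter into $g$. *)

theory Defs
  imports "HOL-Analysis.Analysis"
begin

type_synonym st = "complex \<times> complex \<times> complex \<times> complex \<times> complex \<times> complex \<times> complex"

definition st_x :: "st \<Rightarrow> complex" where "st_x = (\<lambda>(x,y,z,w,q,t,a). x)"
definition st_y :: "st \<Rightarrow> complex" where "st_y = (\<lambda>(x,y,z,w,q,t,a). y)"
definition st_z :: "st \<Rightarrow> complex" where "st_z = (\<lambda>(x,y,z,w,q,t,a). z)"
definition st_w :: "st \<Rightarrow> complex" where "st_w = (\<lambda>(x,y,z,w,q,t,a). w)"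
definition st_q :: "st \<Rightarrow> complex" where "st_q = (\<lambda>(x,y,z,w,q,t,a). q)"
definition st_t :: "st \<Rightarrow> complex" where "st_t = (\<lambda>(x,y,z,w,q,t,a). t)"
definition st_a :: "st \<Rightarrow> complex" where "st_a = (\<lambda>(x,y,z,w,q,t,a). a)"

definition is_solution ::
  "complex set \<Rightarrow> complex \<Rightarrow> (complex \<Rightarrow> complex) \<Rightarrow> (complex \<Rightarrow> complex) \<Rightarrow>
   (complex \<Rightarrow> complex) \<Rightarrow> (complex \<Rightarrow> complex) \<Rightarrow> (complex \<Rightarrow> complex) \<Rightarrow> bool" where
  "is_solution U a x y z w q \<longleftrightarrow> open U \<and>
     (\<forall>t\<in>U. (x has_field_derivative y t) (at t) \<and>
            (y has_field_derivative z t) (at t) \<and>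
            (z has_field_derivative (-6 * (y t)^2 + w t + t / 4)) (at t) \<and>
            (w has_field_derivative (w t * q t + (2 * a - 1) / 4)) (at t) \<and>
            (q has_field_derivative (-(1/2) * (q t)^2 - 4 * y t)) (at t))"

definition Dfun :: "st \<Rightarrow> complex" where
  "Dfun = (\<lambda>(x,y,z,w,q,t,a). t + 2*w + 2*y*q^2 - 8*y^2 - 4*z*q)"

definition s0 :: "st \<Rightarrow> st" where
  "s0 = (\<lambda>(x,y,z,w,q,t,a). (x, y, z, w, q + (a - 1/2) / w, t, 1 - a))"

definition s1 :: "st \<Rightarrow> st" where
  "s1 = (\<lambda>P. case P of (x,y,z,w,q,t,a) \<Rightarrow>
     (let D = Dfun P; b = 2*a + 1 in
      (x + b / (2*D),
       y + b*q / (2*D) - b^2 / (4*D^2),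
       z + b*(q^2 - 8*y) / (4*D) - 3*b^2*q / (4*D^2) + b^3 / (4*D^3),
       w + 2*b*(y*q - z) / D + b^2*(q^2 + 4*y) / (4*D^2),
       q - b / D,
       t,
       -1 - a)))"

definition pi_tr :: "st \<Rightarrow> st" where
  "pi_tr = (\<lambda>(x,y,z,w,q,t,a).
     (x + q/2,
      -(y + q^2/4),
      -(z - (1/4)*q*(q^2 + 8*y)),
      -(w + y*q^2 - 4*y^2 - 2*z*q + t/2),
      -q,
      t,
      -a))"

definition backlund :: "(st \<Rightarrow> st) \<Rightarrow> (st \<Rightarrow> bool) \<Rightarrow> bool" where
  "backlund T ok \<longleftrightarrow>
     (\<forall>U a x y z w q. is_solution U a x y z w q \<and>
        (\<forall>t\<in>U. ok (x t, y t, z t, w t, q t, t, a)) \<longrightarrow>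
        (let X' = (\<lambda>t. T (x t, y t, z t, w t, q t, t, a)) in
          (\<forall>t\<in>U. st_t (X' t) = t) \<and>
          (\<forall>t0\<in>U. is_solution U (st_a (X' t0))
              (\<lambda>t. st_x (X' t)) (\<lambda>t. st_y (X' t)) (\<lambda>t. st_z (X' t))
              (\<lambda>t. st_w (X' t)) (\<lambda>t. st_q (X' t)))))"

end

theory Submission
  imports Defs
begin

text \<open>
  Being a solution is a pointwise condition on derivatives, so each transformation can be
  checked at a single point. For \<open>s\<^sub>1\<close>
  the key fact is that along a solution \<open>D' = (2\<alpha>\<^sub>2 + 1)/2 - q D\<close>, so
  \<open>v = (2\<alpha>\<^sub>2 + 1)/(2D)\<close> satisfies the Riccati equation \<open>v' = q v - v\<^sup>2\<close>; \<open>s\<^sub>1\<close> is a shift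
  polynomial in \<open>v\<close>, and the transformed equations follow from the Riccati equation and
  \<open>v D = (2\<alpha>\<^sub>2 + 1)/2\<close>.
  The group relations are algebraic: \<open>D\<close> is invariant under the shift while \<open>v\<close> changes
  sign, so \<open>s\<^sub>1\<close> is an involution; and \<open>\<pi>\<close> turns the shift into \<open>q \<mapsto> q + 2v\<close>, which is what
  \<open>s\<^sub>0\<close> does to \<open>\<pi> P\<close> because the \<open>w\<close>-component of \<open>\<pi> P\<close> is \<open>-D/2\<close>.
\<close>

definition solves_at ::
  "complex \<Rightarrow> (complex \<Rightarrow> complex) \<Rightarrow> (complex \<Rightarrow> complex) \<Rightarrow> (complex \<Rightarrow> complex) \<Rightarrow>
   (complex \<Rightarrow> complex) \<Rightarrow> (complex \<Rightarrow> complex) \<Rightarrow> complex \<Rightarrow> bool" where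
  "solves_at a x y z w q t \<longleftrightarrow>
     (x has_field_derivative y t) (at t) \<and>
     (y has_field_derivative z t) (at t) \<and>
     (z has_field_derivative (-6 * (y t)^2 + w t + t / 4)) (at t) \<and>
     (w has_field_derivative (w t * q t + (2 * a - 1) / 4)) (at t) \<and>
     (q has_field_derivative (-(1/2) * (q t)^2 - 4 * y t)) (at t)"

lemma is_solution_iff_solves_at:
  "is_solution U a x y z w q \<longleftrightarrow> open U \<and> (\<forall>t\<in>U. solves_at a x y z w q t)"
  by (simp add: is_solution_def solves_at_def)

lemma backlund_if_solves_at:
  assumes t_fixed: "\<And>x y z w q t a. st_t (T (x,y,z,w,q,t,a)) = t"
    and a_image: "\<And>x y z w q t a. st_a (T (x,y,z,w,q,t,a)) = A a"
    and solves: "\<And>a x y z w q t. solves_at a x y z w q t \<Longrightarrow> ok (x t, y t, z t, w t, q t, t, a) \<Longrightarrow>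
      solves_at (A a) (\<lambda>s. st_x (T (x s, y s, z s, w s, q s, s, a)))
        (\<lambda>s. st_y (T (x s, y s, z s, w s, q s, s, a))) (\<lambda>s. st_z (T (x s, y s, z s, w s, q s, s, a)))
        (\<lambda>s. st_w (T (x s, y s, z s, w s, q s, s, a))) (\<lambda>s. st_q (T (x s, y s, z s, w s, q s, s, a))) t"
  shows "backlund T ok"
  unfolding backlund_def Let_def is_solution_iff_solves_at
  using t_fixed a_image solves by simp

lemma solves_at_s0:
  assumes "solves_at a x y z w q t" and "w t \<noteq> 0"
  shows "solves_at (1 - a) x y z w (\<lambda>s. q s + (a - 1/2) / w s) t"
  using assms unfolding solves_at_def
  by (auto intro!: derivative_eq_intros elim: DERIV_cong simp: field_simps power2_eq_square)

lemma solves_at_pi_tr: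
  assumes "solves_at a x y z w q t"
  shows "solves_at (-a) (\<lambda>s. x s + q s / 2) (\<lambda>s. -(y s + (q s)^2 / 4))
    (\<lambda>s. -(z s - (1/4) * q s * ((q s)^2 + 8 * y s)))
    (\<lambda>s. -(w s + y s * (q s)^2 - 4 * (y s)^2 - 2 * z s * q s + s / 2)) (\<lambda>s. - q s) t"
  using assms unfolding solves_at_def
  by (auto intro!: derivative_eq_intros simp: field_simps power2_eq_square power3_eq_cube)

definition s1_shift :: "complex \<Rightarrow> st \<Rightarrow> st" where
  "s1_shift v = (\<lambda>(x,y,z,w,q,t,a).
     (x + v, y + q * v - v^2, z + (q^2 - 8*y) * v / 2 - 3*q * v^2 + 2 * v^3,
      w + 4*(y*q - z) * v + (q^2 + 4*y) * v^2, q - 2 * v, t, -1 - a))"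

definition s1_multiplier :: "st \<Rightarrow> complex" where
  "s1_multiplier P = (2 * st_a P + 1) / (2 * Dfun P)"

lemma s1_eq_s1_shift: "s1 P = s1_shift (s1_multiplier P) P"
  \<comment> \<open>also where \<open>D = 0\<close>: then both sides divide by zero and leave \<open>P\<close> unchanged up to the parameter\<close>
  by (cases P; cases "Dfun P = 0")
    (simp_all add: s1_def s1_shift_def s1_multiplier_def st_a_def Let_def
      field_simps power2_eq_square power3_eq_cube)

lemma has_field_derivative_Dfun:
  assumes "solves_at a x y z w q t"
  shows "((\<lambda>s. Dfun (x s, y s, z s, w s, q s, s, a)) has_field_derivative
     ((2*a + 1)/2 - q t * Dfun (x t, y t, z t, w t, q t, t, a))) (at t)"
  using assms unfolding solves_at_def Dfun_def
  by (auto intro!: derivative_eq_intros simp: field_simps power2_eq_square)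

lemma s1_multiplier_riccati:
  assumes sol: "solves_at a x y z w q t" and D_nonzero: "Dfun (x t, y t, z t, w t, q t, t, a) \<noteq> 0"
  defines "v \<equiv> \<lambda>s. s1_multiplier (x s, y s, z s, w s, q s, s, a)"
  shows "(v has_field_derivative (q t * v t - (v t)^2)) (at t)"
proof -
  let ?D = "\<lambda>s. Dfun (x s, y s, z s, w s, q s, s, a)"
  have v_eq: "v = (\<lambda>s. (2*a + 1) / 2 * inverse (?D s))"
    by (simp add: v_def s1_multiplier_def st_a_def field_simps)
  have "(v has_field_derivative
      (2*a + 1) / 2 * - (((2*a + 1) / 2 - q t * ?D t) * inverse (?D t ^ Suc (Suc 0)))) (at t)"
    unfolding v_eq
    by (rule DERIV_cmult[OF DERIV_inverse_fun[OF has_field_derivative_Dfun[OF sol] D_nonzero]])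
  then show ?thesis
    by (rule DERIV_cong) (use D_nonzero in \<open>simp add: v_eq field_simps power2_eq_square\<close>)
qed

lemma solves_at_s1_shift:
  assumes sol: "solves_at a x y z w q t"
    and riccati: "(v has_field_derivative (q t * v t - (v t)^2)) (at t)"
    and v_D: "v t * Dfun (x t, y t, z t, w t, q t, t, a) = (2*a + 1) / 2"
  shows "solves_at (-1 - a) (\<lambda>s. x s + v s) (\<lambda>s. y s + q s * v s - (v s)^2)
    (\<lambda>s. z s + ((q s)^2 - 8 * y s) * v s / 2 - 3 * q s * (v s)^2 + 2 * (v s)^3)
    (\<lambda>s. w s + 4 * (y s * q s - z s) * v s + ((q s)^2 + 4 * y s) * (v s)^2)
    (\<lambda>s. q s - 2 * v s) t"
proof -
  \<comment> \<open>only the \<open>w\<close>-equation needs \<open>v_D\<close>: its derivative is off by \<open>(2a + 1)/2 - v D\<close>\<close>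
  let ?w' = "\<lambda>s. w s + 4 * (y s * q s - z s) * v s + ((q s)^2 + 4 * y s) * (v s)^2"
  have "(?w' has_field_derivative ?w' t * (q t - 2 * v t) + (2 * (-1 - a) - 1) / 4
      + ((2*a + 1) / 2 - v t * Dfun (x t, y t, z t, w t, q t, t, a))) (at t)"
    using sol riccati unfolding solves_at_def Dfun_def
    by (auto intro!: derivative_eq_intros simp: field_simps power2_eq_square power3_eq_cube)
  with sol riccati v_D show ?thesis
    unfolding solves_at_def
    by (auto intro!: derivative_eq_intros simp: field_simps power2_eq_square power3_eq_cube)
qed

lemmas st_component_defs = st_x_def st_y_def st_z_def st_w_def st_q_def st_t_def st_a_def

lemma backlund_s0: "backlund s0 (\<lambda>P. st_w P \<noteq> 0)"
  by (rule backlund_if_solves_at[where A = "\<lambda>a. 1 - a"];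
      simp only: s0_def st_component_defs prod.case; blast intro: solves_at_s0)

lemma backlund_pi_tr: "backlund pi_tr (\<lambda>P. True)"
  by (rule backlund_if_solves_at[where A = "\<lambda>a. - a"];
      simp only: pi_tr_def st_component_defs prod.case; blast intro: solves_at_pi_tr)

lemma backlund_s1: "backlund s1 (\<lambda>P. Dfun P \<noteq> 0)"
  by (rule backlund_if_solves_at[where A = "\<lambda>a. -1 - a"];
      simp only: s1_eq_s1_shift s1_shift_def st_component_defs prod.case;
      intro solves_at_s1_shift s1_multiplier_riccati)
    (simp_all add: s1_multiplier_def st_a_def)

lemma Dfun_s1_shift: "Dfun (s1_shift v P) = Dfun P"
  by (cases P) (simp add: s1_shift_def Dfun_def power2_eq_square power3_eq_cube field_simps)

lemma s1_shift_inverse: "s1_shift (-v) (s1_shift v P) = P"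
  by (cases P) (simp add: s1_shift_def power2_eq_square power3_eq_cube field_simps)

lemma s1_involution: "s1 (s1 P) = P"
proof -
  have "2 * st_a (s1 P) + 1 = - (2 * st_a P + 1)"
    by (cases P) (simp add: s1_def st_a_def Let_def)
  moreover have "Dfun (s1 P) = Dfun P"
    by (simp add: s1_eq_s1_shift Dfun_s1_shift)
  ultimately have "s1_multiplier (s1 P) = - s1_multiplier P"
    by (simp only: s1_multiplier_def minus_divide_left)
  then show ?thesis
    by (metis s1_eq_s1_shift s1_shift_inverse)
qed

lemma s0_involution: "st_w P \<noteq> 0 \<Longrightarrow> s0 (s0 P) = P"
  by (cases P) (simp add: s0_def st_w_def field_simps)

lemma pi_tr_involution: "pi_tr (pi_tr P) = P"
  by (cases P) (simp add: pi_tr_def field_simps power2_eq_square power3_eq_cube)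

lemma pi_tr_s1_shift:
  "pi_tr (s1_shift v (x,y,z,w,q,t,a)) =
    (x + q/2, -(y + q^2/4), -(z - (1/4)*q*(q^2 + 8*y)), -(w + y*q^2 - 4*y^2 - 2*z*q + t/2),
     -q + 2 * v, t, 1 + a)"
  by (simp add: pi_tr_def s1_shift_def field_simps power2_eq_square power3_eq_cube)

lemma s0_pi_tr_eq_pi_tr_s1: "s0 (pi_tr P) = pi_tr (s1 P)"
proof (cases P)
  case (fields x y z w q t a)
  let ?pi_x = "x + q/2" and ?pi_y = "-(y + q^2/4)" and ?pi_z = "-(z - (1/4)*q*(q^2 + 8*y))"
    and ?pi_w = "-(w + y*q^2 - 4*y^2 - 2*z*q + t/2)"
  have "pi_tr (s1 P) = (?pi_x, ?pi_y, ?pi_z, ?pi_w, -q + 2 * s1_multiplier P, t, 1 + a)"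
    by (simp add: fields s1_eq_s1_shift pi_tr_s1_shift)
  moreover have "s0 (pi_tr P) = (?pi_x, ?pi_y, ?pi_z, ?pi_w, -q + (-a - 1/2) / ?pi_w, t, 1 + a)"
    by (simp add: fields s0_def pi_tr_def)
  moreover have "?pi_w = - Dfun P / 2"
    by (simp add: fields Dfun_def field_simps)
  then have "(-a - 1/2) / ?pi_w = 2 * s1_multiplier P"
    by (cases "Dfun P = 0") (simp_all add: s1_multiplier_def fields st_a_def field_simps)
  ultimately show ?thesis
    by simp
qed

theorem theorem9p2:
  shows "backlund s0 (\<lambda>P. st_w P \<noteq> 0)
       \<and> backlund s1 (\<lambda>P. Dfun P \<noteq> 0)
       \<and> backlund pi_tr (\<lambda>P. True)
       \<and> (\<forall>P. st_w P \<noteq> 0 \<longrightarrow> s0 (s0 P) = P)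
       \<and> (\<forall>P. Dfun P \<noteq> 0 \<longrightarrow> s1 (s1 P) = P)
       \<and> (\<forall>P. pi_tr (pi_tr P) = P)
       \<and> (\<forall>P. Dfun P \<noteq> 0 \<longrightarrow> s0 (pi_tr P) = pi_tr (s1 P))"
  by (simp add: backlund_s0 backlund_s1 backlund_pi_tr s0_involution s1_involution
      pi_tr_involution s0_pi_tr_eq_pi_tr_s1)

end
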